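(* Let $\mathcal{C}$ be a covering of a finite set $E$. For $x\in E$ let $N(x)=\bigcap\{K\in\mathcal{C}:x\in K\}$, and define $XH:2^E\to 2^E$ by $XH(X)=\{x\in E:N(x)\cap X\neq\emptyset\}$. Then $\{N(x):x\in E\}$ forms a partition of $E$ if and only if $XH$ is the closure operator of some matroid on $E$.
   Context: A covering of $E$ is a family of nonempty subsets of $E$ with union $E$. "$\{N(x):x\in E\}$ forms a partition" means that the distinct sets among the $N(x)$ are pairwise disjoint (their union is $E$ since $x\in N(x)$). The closure operator of a matroid with rank function $r$ is $cl(X)=\{a\in E:r(X\cup\{a\})=r(X)\}$. *)

theory Defs
  imports Main
begin

definition covering :: "'a set set \<Rightarrow> 'a set \<Rightarrow> bool" where
  "covering C E \<longleftrightarrow> (\<forall>K\<in>C. K \<noteq> {} \<and> K \<subseteq> E) \<and> \<Union>C = E"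

definition Nset :: "'a set set \<Rightarrow> 'a \<Rightarrow> 'a set" where
  "Nset C x = \<Inter>{K \<in> C. x \<in> K}"

definition XH :: "'a set set \<Rightarrow> 'a set \<Rightarrow> 'a set \<Rightarrow> 'a set" where
  "XH C E X = {x \<in> E. Nset C x \<inter> X \<noteq> {}}"

definition N_partition :: "'a set set \<Rightarrow> 'a set \<Rightarrow> bool" where
  "N_partition C E \<longleftrightarrow> (\<forall>x\<in>E. \<forall>y\<in>E. Nset C x = Nset C y \<or> Nset C x \<inter> Nset C y = {})"

definition matroid_rank :: "'a set \<Rightarrow> ('a set \<Rightarrow> nat) \<Rightarrow> bool" where
  "matroid_rank E r \<longleftrightarrow> finite E \<and>
     (\<forall>X. X \<subseteq> E \<longrightarrow> r X \<le> card X) \<and>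
     (\<forall>X Y. X \<subseteq> Y \<and> Y \<subseteq> E \<longrightarrow> r X \<le> r Y) \<and>
     (\<forall>X Y. X \<subseteq> E \<and> Y \<subseteq> E \<longrightarrow> r (X \<union> Y) + r (X \<inter> Y) \<le> r X + r Y)"

definition matroid_cl :: "'a set \<Rightarrow> ('a set \<Rightarrow> nat) \<Rightarrow> 'a set \<Rightarrow> 'a set" where
  "matroid_cl E r X = {a \<in> E. r (X \<union> {a}) = r X}"

end

theory Submission
  imports Defs
begin

text \<open>
  If the sets N(x) partition E, then N(x) meets X exactly when the block of x has an element
  of X, so XH is the closure operator of the partition matroid whose rank counts the blocks
  met by a set. Conversely, XH {} = {} means the matroid has no loops, and in a matroid
  a \<in> cl {b} for a non-loop a implies b \<in> cl {a}; since y \<in> N(x) means x \<in> XH {y}, this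
  makes the relation y \<in> N(x) symmetric, so that N(y) = N(x) whenever y \<in> N(x).
\<close>

lemma Nset_self: "x \<in> Nset C x"
  unfolding Nset_def by blast

lemma Nset_subset: "covering C E \<Longrightarrow> x \<in> E \<Longrightarrow> Nset C x \<subseteq> E"
  unfolding Nset_def covering_def by blast

lemma Nset_subset_Nset: "y \<in> Nset C x \<Longrightarrow> Nset C y \<subseteq> Nset C x"
  unfolding Nset_def by blast

lemma N_partition_iff_Nset_eq:
  assumes "covering C E"
  shows "N_partition C E \<longleftrightarrow> (\<forall>x\<in>E. \<forall>y\<in>Nset C x. Nset C y = Nset C x)"
proof
  assume part: "N_partition C E"
  show "\<forall>x\<in>E. \<forall>y\<in>Nset C x. Nset C y = Nset C x"
  proof (intro ballI)
    fix x y assume "x \<in> E" "y \<in> Nset C x"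
    moreover from this have "y \<in> E" using Nset_subset[OF assms] by blast
    ultimately show "Nset C y = Nset C x"
      using part Nset_self[of y C] unfolding N_partition_def by blast
  qed
next
  assume eq: "\<forall>x\<in>E. \<forall>y\<in>Nset C x. Nset C y = Nset C x"
  show "N_partition C E"
    unfolding N_partition_def
  proof (intro ballI)
    fix x y assume "x \<in> E" "y \<in> E"
    show "Nset C x = Nset C y \<or> Nset C x \<inter> Nset C y = {}"
    proof (cases "Nset C x \<inter> Nset C y = {}")
      case False
      then obtain z where "z \<in> Nset C x" "z \<in> Nset C y" by blast
      with eq \<open>x \<in> E\<close> \<open>y \<in> E\<close> have "Nset C z = Nset C x" "Nset C z = Nset C y"
        by blast+
      then show ?thesis by simp
    qed simp
  qed
qed

lemma XH_empty: "XH C E {} = {}"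
  unfolding XH_def by simp

lemma XH_singleton: "XH C E {y} = {x \<in> E. y \<in> Nset C x}"
  unfolding XH_def by auto

lemma XH_eq_if_N_partition:
  assumes "covering C E" "N_partition C E"
  shows "XH C E X = {x \<in> E. Nset C x \<in> Nset C ` X}"
proof -
  have "Nset C x \<inter> X \<noteq> {} \<longleftrightarrow> Nset C x \<in> Nset C ` X" if "x \<in> E" for x
  proof
    assume "Nset C x \<inter> X \<noteq> {}"
    then obtain y where "y \<in> X" "y \<in> Nset C x" by blast
    with that assms have "Nset C x = Nset C y" using N_partition_iff_Nset_eq by metis
    then show "Nset C x \<in> Nset C ` X" using \<open>y \<in> X\<close> by (rule image_eqI)
  next
    assume "Nset C x \<in> Nset C ` X"
    then obtain y where "y \<in> X" "Nset C x = Nset C y" by blast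
    then show "Nset C x \<inter> X \<noteq> {}" using Nset_self[of y C] by auto
  qed
  then show ?thesis unfolding XH_def by auto
qed

lemma matroid_rank_card_image:
  assumes "finite E"
  shows "matroid_rank E (\<lambda>X. card (f ` X))"
  unfolding matroid_rank_def
proof (intro conjI allI impI)
  show "finite E" by fact
next
  fix X assume "X \<subseteq> E"
  then show "card (f ` X) \<le> card X"
    using assms by (simp add: card_image_le finite_subset)
next
  fix X Y assume "X \<subseteq> Y \<and> Y \<subseteq> E"
  then show "card (f ` X) \<le> card (f ` Y)"
    using assms by (meson card_mono finite_imageI finite_subset image_mono)
next
  fix X Y assume "X \<subseteq> E \<and> Y \<subseteq> E"
  then have fin: "finite (f ` X)" "finite (f ` Y)"
    using assms by (auto intro: finite_subset)
  have "card (f ` (X \<inter> Y)) \<le> card (f ` X \<inter> f ` Y)"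
    using fin by (intro card_mono) auto
  then show "card (f ` (X \<union> Y)) + card (f ` (X \<inter> Y)) \<le> card (f ` X) + card (f ` Y)"
    using card_Un_Int[OF fin] by (simp add: image_Un)
qed

lemma matroid_cl_card_image:
  assumes "finite X"
  shows "matroid_cl E (\<lambda>X. card (f ` X)) X = {a \<in> E. f a \<in> f ` X}"
  unfolding matroid_cl_def using assms by (auto simp: card_insert_if)

lemma matroid_rank_le_card: "matroid_rank E r \<Longrightarrow> X \<subseteq> E \<Longrightarrow> r X \<le> card X"
  unfolding matroid_rank_def by blast

lemma matroid_rank_mono: "matroid_rank E r \<Longrightarrow> X \<subseteq> Y \<Longrightarrow> Y \<subseteq> E \<Longrightarrow> r X \<le> r Y"
  unfolding matroid_rank_def by blast

lemma matroid_cl_singleton_sym: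
  assumes M: "matroid_rank E r" and "a \<in> E" "b \<in> E"
    and a_cl_b: "a \<in> matroid_cl E r {b}" and nonloop: "a \<notin> matroid_cl E r {}"
  shows "b \<in> matroid_cl E r {a}"
proof -
  have "r {} = 0" using matroid_rank_le_card[OF M, of "{}"] by simp
  with nonloop \<open>a \<in> E\<close> have "r {a} \<noteq> 0" unfolding matroid_cl_def by simp
  moreover have "r {a} \<le> 1" using matroid_rank_le_card[OF M, of "{a}"] \<open>a \<in> E\<close> by simp
  ultimately have ra: "r {a} = 1" by linarith
  have "r {a} \<le> r {a, b}" using matroid_rank_mono[OF M] \<open>a \<in> E\<close> \<open>b \<in> E\<close> by simp
  moreover have "r {a, b} = r {b}"
    using a_cl_b unfolding matroid_cl_def by (simp add: insert_commute)
  moreover have "r {b} \<le> 1" using matroid_rank_le_card[OF M, of "{b}"] \<open>b \<in> E\<close> by simp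
  ultimately have "r {a, b} = r {a}" using ra by simp
  with \<open>b \<in> E\<close> show ?thesis unfolding matroid_cl_def by (simp add: insert_commute)
qed

theorem theorem10:
  fixes C :: "'a set set" and E :: "'a set"
  assumes "finite E" and "covering C E"
  shows "N_partition C E \<longleftrightarrow>
    (\<exists>r. matroid_rank E r \<and> (\<forall>X. X \<subseteq> E \<longrightarrow> XH C E X = matroid_cl E r X))"
proof
  assume "N_partition C E"
  then have "XH C E X = matroid_cl E (\<lambda>X. card (Nset C ` X)) X" if "X \<subseteq> E" for X
    using that assms finite_subset[OF that]
    by (simp add: XH_eq_if_N_partition matroid_cl_card_image)
  then show "\<exists>r. matroid_rank E r \<and> (\<forall>X. X \<subseteq> E \<longrightarrow> XH C E X = matroid_cl E r X)"
    using matroid_rank_card_image[OF \<open>finite E\<close>] by blast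
next
  assume "\<exists>r. matroid_rank E r \<and> (\<forall>X. X \<subseteq> E \<longrightarrow> XH C E X = matroid_cl E r X)"
  then obtain r where M: "matroid_rank E r"
    and cl: "\<And>X. X \<subseteq> E \<Longrightarrow> XH C E X = matroid_cl E r X" by blast
  have "Nset C y = Nset C x" if "x \<in> E" "y \<in> Nset C x" for x y
  proof -
    have "y \<in> E" using that Nset_subset[OF assms(2)] by blast
    have "x \<in> matroid_cl E r {y}" "x \<notin> matroid_cl E r {}"
      using that cl[of "{y}"] cl[of "{}"] \<open>y \<in> E\<close> by (auto simp: XH_singleton XH_empty)
    then have "y \<in> matroid_cl E r {x}"
      using matroid_cl_singleton_sym[OF M \<open>x \<in> E\<close> \<open>y \<in> E\<close>] by blast
    then have "y \<in> XH C E {x}" using cl[of "{x}"] \<open>x \<in> E\<close> by simp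
    then have "x \<in> Nset C y" by (simp add: XH_singleton)
    then show ?thesis using \<open>y \<in> Nset C x\<close> by (simp add: Nset_subset_Nset subset_antisym)
  qed
  then show "N_partition C E" by (simp add: N_partition_iff_Nset_eq[OF assms(2)])
qed

end
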